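(* Let $q$ be a prime power, $n=2^v$ with $v\ge1$ and $q$ odd. Let $s,t$ be integers with $s$ odd, $qt\equiv t\pmod{2^v}$ and $t\not\equiv0\pmod{2^v}$. Type-I duadic splittings of $\mathbb{Z}_{2^v}$ given by $\rho_{s,t}$ exist if and only if $\nu_2(q^j-s)>\nu_2(t)$ for all integers $j\ge0$.
   Context: $\mu_q:\mathbb{Z}_n\to\mathbb{Z}_n$, $i\mapsto qi\bmod n$; $P\subseteq\mathbb{Z}_n$ is $\mu_q$-invariant if $\mu_q(P)=P$. $\rho_{s,t}:\mathbb{Z}_n\to\mathbb{Z}_n$, $i\mapsto s(i+t)\bmod n$. Type-I duadic splittings of $\mathbb{Z}_n$ given by $\rho_{s,t}$ exist if there is a $\mu_q$-invariant $P$ with $\mathbb{Z}_n=P\cup\rho_{s,t}(P)$ a disjoint union. $\nu_2$ is the $2$-adic valuation, $\nu_2(0)=\infty$. *)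

theory Defs
  imports "HOL-Computational_Algebra.Computational_Algebra" "HOL-Number_Theory.Number_Theory"
    "HOL-Library.Extended_Nat"
begin

text \<open>Z_n is represented by the residues {0..<n} (as integers).\<close>

definition mu_map :: "int \<Rightarrow> int \<Rightarrow> int \<Rightarrow> int" where
  "mu_map n q i = (q * i) mod n"

definition rho_map :: "int \<Rightarrow> int \<Rightarrow> int \<Rightarrow> int \<Rightarrow> int" where
  "rho_map n s t i = (s * (i + t)) mod n"

definition mu_invariant :: "int \<Rightarrow> int \<Rightarrow> int set \<Rightarrow> bool" where
  "mu_invariant n q P \<longleftrightarrow> mu_map n q ` P = P"

definition typeI_duadic_exists :: "int \<Rightarrow> int \<Rightarrow> int \<Rightarrow> int \<Rightarrow> bool" where
  "typeI_duadic_exists n q s t \<longleftrightarrow>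
     (\<exists>P. P \<subseteq> {0..<n} \<and> mu_invariant n q P \<and>
          P \<union> rho_map n s t ` P = {0..<n} \<and> P \<inter> rho_map n s t ` P = {})"

definition nu2 :: "int \<Rightarrow> enat" where
  "nu2 x = (if x = 0 then \<infinity> else enat (multiplicity (2::int) x))"

definition prime_power :: "nat \<Rightarrow> bool" where
  "prime_power q \<longleftrightarrow> (\<exists>p k. prime p \<and> k \<ge> 1 \<and> q = p ^ k)"

end

theory Submission
  imports Defs
begin

text \<open>
  Let \<open>\<tau> = \<nu>\<^sub>2(t)\<close> and \<open>M = 2^(\<tau>+1)\<close>. If \<open>M\<close> divides every \<open>q^j - s\<close>, then
  \<open>q \<equiv> s \<equiv> 1\<close> and \<open>t \<equiv> M/2 (mod M)\<close>, so \<open>\<mu>\<^sub>q\<close> preserves residues mod \<open>M\<close> while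
  \<open>\<rho>\<^sub>s\<^sub>,\<^sub>t\<close> shifts them by \<open>M/2\<close>: the residues \<open>x\<close> with \<open>x mod M < M/2\<close> form a
  \<open>\<mu>\<^sub>q\<close>-invariant set that \<open>\<rho>\<close> swaps with its complement.
  Conversely, if \<open>\<nu>\<^sub>2(q^j - s) \<le> \<tau>\<close>, the congruence \<open>(q^j - s) x \<equiv> s t\<close> is solvable,
  i.e. \<open>\<rho>(x) = \<mu>\<^sub>q^j(x)\<close> for some \<open>x\<close>. Since \<open>q t \<equiv> t\<close>, the map \<open>\<mu>\<^sub>q^j\<close> commutes
  with \<open>\<rho>\<close>, and as it also preserves a splitting \<open>P\<close>, such a coincidence is impossible.
\<close>

lemma mu_map_mod [simp]: "mu_map n c (x mod n) = mu_map n c x"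
  by (simp add: mu_map_def mod_mult_right_eq)

lemma rho_map_mod [simp]: "rho_map n s t (x mod n) = rho_map n s t x"
  unfolding rho_map_def by (metis mod_add_left_eq mod_mult_right_eq)

lemma bij_betw_rho_map:
  assumes "0 < n" "coprime s n"
  shows "bij_betw (rho_map n s t) {0..<n} {0..<n}"
proof -
  have "inj_on (rho_map n s t) {0..<n}"
  proof
    fix x y assume "x \<in> {0..<n}" "y \<in> {0..<n}" "rho_map n s t x = rho_map n s t y"
    moreover from this have "[x + t = y + t] (mod n)"
      using assms(2) by (simp add: rho_map_def cong_def[symmetric] cong_mult_lcancel)
    ultimately show "x = y" by (auto simp: cong_add_rcancel intro: cong_less_imp_eq_int)
  qed
  moreover have "rho_map n s t ` {0..<n} \<subseteq> {0..<n}" using assms(1) by (auto simp: rho_map_def)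
  ultimately show ?thesis by (simp add: bij_betw_def endo_inj_surj)
qed

lemma bij_betw_mu_map:
  assumes "0 < n" "coprime c n"
  shows "bij_betw (mu_map n c) {0..<n} {0..<n}"
proof -
  have "mu_map n c = rho_map n c 0" by (simp add: fun_eq_iff mu_map_def rho_map_def)
  then show ?thesis using bij_betw_rho_map[OF assms] by simp
qed

lemma funpow_mu_map: "(mu_map n c ^^ j) (x mod n) = mu_map n (c ^ j) x"
  by (induction j) (simp_all add: mu_map_def mod_mult_right_eq mult.assoc)

lemma mu_invariant_power:
  assumes "mu_invariant n c P" "P \<subseteq> {0..<n}"
  shows "mu_invariant n (c ^ j) P"
proof -
  have "(mu_map n c ^^ j) ` P = P"
  proof (induction j)
    case (Suc j)
    have "(mu_map n c ^^ Suc j) ` P = mu_map n c ` (mu_map n c ^^ j) ` P" by (simp add: image_comp)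
    then show ?case using Suc assms(1) by (simp add: mu_invariant_def)
  qed simp
  moreover have "(mu_map n c ^^ j) x = mu_map n (c ^ j) x" if "x \<in> P" for x
  proof -
    have "x mod n = x" using that assms(2) by auto
    then show ?thesis using funpow_mu_map[where n = n and c = c and j = j and x = x] by simp
  qed
  ultimately show ?thesis unfolding mu_invariant_def by (metis image_cong)
qed

lemma cong_power_mult_fixed:
  fixes c t n :: int
  assumes "[c * t = t] (mod n)"
  shows "[c ^ j * t = t] (mod n)"
proof (induction j)
  case (Suc j)
  have "[c * (c ^ j * t) = c * t] (mod n)" using Suc by (rule cong_scalar_left)
  then show ?case using assms by (simp add: mult.assoc cong_trans)
qed simp

lemma rho_map_mu_map_commute:
  assumes "[c * t = t] (mod n)"
  shows "rho_map n s t (mu_map n c x) = mu_map n c (rho_map n s t x)"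
proof -
  have "[s * (c * x + t) = s * (c * x + c * t)] (mod n)"
    using assms by (intro cong_scalar_left cong_add) (auto simp: cong_sym)
  then have "rho_map n s t (c * x) = mu_map n c (s * (x + t))"
    by (simp add: rho_map_def mu_map_def cong_def algebra_simps)
  then show ?thesis
    by (metis mu_map_def mu_map_mod rho_map_def rho_map_mod)
qed

lemma splitting_excludes_coincidence:
  assumes "P \<union> g ` P = A" "P \<inter> g ` P = {}" "inj_on g A" "f ` P \<subseteq> P"
    and "\<And>y. y \<in> P \<Longrightarrow> f (g y) = g (f y)" and "x \<in> A"
  shows "g x \<noteq> f x"
proof
  assume coincide: "g x = f x"
  show False
  proof (cases "x \<in> P")
    case True
    then show False using coincide assms(2,4) by blast
  next
    case False
    then obtain y where y: "y \<in> P" "x = g y" using assms(1,6) by blast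
    have "g x = g (f y)" using coincide y assms(5) by simp
    then have "x = f y" using y assms(1,3,4,6) by (auto dest: inj_onD)
    then show False using False y assms(4) by blast
  qed
qed

lemma typeI_duadic_exists_imp_not_gcd_dvd:
  assumes "typeI_duadic_exists n c s t" "0 < n" "coprime s n" "[c * t = t] (mod n)"
  shows "\<not> gcd (c ^ j - s) n dvd t"
proof
  assume "gcd (c ^ j - s) n dvd t"
  then have "gcd (c ^ j - s) n dvd s * t" by (rule dvd_mult)
  then obtain x where "[(c ^ j - s) * x = s * t] (mod n)"
    using cong_solve_dvd_int by blast
  then have "[c ^ j * x = s * (x + t)] (mod n)"
    by (simp add: cong_iff_dvd_diff algebra_simps)
  then have coincide: "rho_map n s t (x mod n) = mu_map n (c ^ j) (x mod n)"
    by (simp only: rho_map_mod mu_map_mod) (simp add: rho_map_def mu_map_def cong_def)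
  obtain P where P: "P \<subseteq> {0..<n}" "mu_invariant n c P"
    "P \<union> rho_map n s t ` P = {0..<n}" "P \<inter> rho_map n s t ` P = {}"
    using assms(1) unfolding typeI_duadic_exists_def by blast
  have "rho_map n s t (x mod n) \<noteq> mu_map n (c ^ j) (x mod n)"
  proof (rule splitting_excludes_coincidence[OF P(3,4)])
    show "inj_on (rho_map n s t) {0..<n}"
      using bij_betw_rho_map[OF assms(2,3)] by (rule bij_betw_imp_inj_on)
    show "mu_map n (c ^ j) ` P \<subseteq> P"
      using mu_invariant_power[OF P(2,1)] by (simp add: mu_invariant_def)
    show "mu_map n (c ^ j) (rho_map n s t y) = rho_map n s t (mu_map n (c ^ j) y)" for y
      by (simp add: rho_map_mu_map_commute[OF cong_power_mult_fixed[OF assms(4)]])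
    show "x mod n \<in> {0..<n}" using assms(2) by simp
  qed
  then show False using coincide by contradiction
qed

lemma bij_betw_image_Collect:
  assumes "bij_betw f A A" "\<And>x. x \<in> A \<Longrightarrow> B (f x) \<longleftrightarrow> C x"
  shows "f ` {x \<in> A. C x} = {x \<in> A. B x}"
proof
  show "f ` {x \<in> A. C x} \<subseteq> {x \<in> A. B x}"
    using assms bij_betw_apply by fastforce
  show "{x \<in> A. B x} \<subseteq> f ` {x \<in> A. C x}"
  proof
    fix y assume y: "y \<in> {x \<in> A. B x}"
    then obtain x where "x \<in> A" "y = f x" using bij_betw_imp_surj_on[OF assms(1)] by blast
    then show "y \<in> f ` {x \<in> A. C x}" using y assms(2) by auto
  qed
qed

lemma half_shift_mod_less_iff:
  fixes x h :: int
  assumes "h > 0"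
  shows "(x + h) mod (2 * h) < h \<longleftrightarrow> \<not> x mod (2 * h) < h"
proof -
  define r where "r = x mod (2 * h)"
  have r: "0 \<le> r" "r < 2 * h" using assms by (simp_all add: r_def)
  have "(x + h) mod (2 * h) = (r + h) mod (2 * h)" by (simp add: r_def mod_add_left_eq)
  also have "\<dots> = (if r < h then r + h else r - h)"
  proof (cases "r < h")
    case False
    have "(r + h) mod (2 * h) = ((r - h) + 2 * h) mod (2 * h)" by (simp add: algebra_simps)
    also have "\<dots> = r - h" using False r by (simp only: mod_add_self2) simp
    finally show ?thesis using False by simp
  qed (use r in simp)
  finally show ?thesis using r by (simp add: r_def[symmetric])
qed

lemma typeI_duadic_exists_if_cong_one:
  assumes "0 < n" "0 < h" "2 * h dvd n" "coprime c n" "coprime s n"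
    and "[c = 1] (mod 2 * h)" "[s = 1] (mod 2 * h)" "[t = h] (mod 2 * h)"
  shows "typeI_duadic_exists n c s t"
proof -
  define P where "P = {x \<in> {0..<n}. x mod (2 * h) < h}"
  have mod_mod: "(a mod n) mod (2 * h) = a mod (2 * h)" for a
    using assms(3) by (simp add: mod_mod_cancel)
  have "mu_map n c ` P = P"
    unfolding P_def
  proof (rule bij_betw_image_Collect[OF bij_betw_mu_map[OF assms(1,4)]])
    fix x
    have "[c * x = 1 * x] (mod 2 * h)" using assms(6) by (rule cong_scalar_right)
    then show "mu_map n c x mod (2 * h) < h \<longleftrightarrow> x mod (2 * h) < h"
      by (simp add: mu_map_def mod_mod cong_def)
  qed
  moreover have "rho_map n s t ` P = {x \<in> {0..<n}. \<not> x mod (2 * h) < h}"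
    unfolding P_def
  proof (rule bij_betw_image_Collect[OF bij_betw_rho_map[OF assms(1,5)]])
    fix x
    have "[s * (x + t) = 1 * (x + h)] (mod 2 * h)"
      using assms(7,8) by (intro cong_mult cong_add) auto
    then show "\<not> rho_map n s t x mod (2 * h) < h \<longleftrightarrow> x mod (2 * h) < h"
      using half_shift_mod_less_iff[OF assms(2), of x] by (simp add: rho_map_def mod_mod cong_def)
  qed
  ultimately show ?thesis
    unfolding typeI_duadic_exists_def mu_invariant_def by (intro exI[of _ P]) (auto simp: P_def)
qed

lemma nu2_gt_iff_dvd:
  fixes x t :: int
  assumes "t \<noteq> 0"
  shows "nu2 x > nu2 t \<longleftrightarrow> 2 ^ Suc (multiplicity 2 t) dvd x"
proof (cases "x = 0")
  case False
  then have "nu2 x > nu2 t \<longleftrightarrow> Suc (multiplicity 2 t) \<le> multiplicity (2::int) x"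
    using assms by (auto simp: nu2_def)
  also have "\<dots> \<longleftrightarrow> 2 ^ Suc (multiplicity 2 t) dvd x"
    using False by (subst power_dvd_iff_le_multiplicity) auto
  finally show ?thesis .
qed (use assms in \<open>simp add: nu2_def\<close>)

lemma cong_two_power_multiplicity:
  fixes t :: int
  assumes "t \<noteq> 0"
  shows "[t = 2 ^ multiplicity 2 t] (mod 2 ^ Suc (multiplicity 2 t))"
proof -
  define m where "m = multiplicity 2 t"
  obtain u where t: "t = 2 ^ m * u" and "odd u"
    unfolding m_def by (rule multiplicity_decompose') (use assms in auto)
  then obtain k where "u = 2 * k + 1" by (blast elim: oddE)
  then have "t - 2 ^ m = 2 ^ Suc m * k"
    using t by (simp add: algebra_simps)
  then show ?thesis unfolding m_def[symmetric] cong_iff_dvd_diff by simp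
qed

lemma gcd_prime_power_dvd_if_not_dvd:
  fixes a p :: int
  assumes "prime p" "\<not> p ^ Suc m dvd a"
  shows "gcd a (p ^ n) dvd p ^ m"
proof -
  obtain k where "normalize (gcd a (p ^ n)) = p ^ k"
    using divides_primepow[OF assms(1) gcd_dvd2] by metis
  then have g: "gcd a (p ^ n) = p ^ k" by simp
  then have "p ^ k dvd a" by (metis gcd_dvd1)
  then have "k \<le> m"
    using assms(2) by (metis not_less_eq_eq power_le_dvd)
  then show ?thesis unfolding g by (rule le_imp_power_dvd)
qed

theorem lemma3p4:
  fixes q v :: nat and s t :: int
  assumes "prime_power q" and "odd q" and "v \<ge> 1"
    and "odd s"
    and "[int q * t = t] (mod 2 ^ v)"
    and "\<not> [t = 0] (mod 2 ^ v)"
  shows "typeI_duadic_exists (2 ^ v) (int q) s t \<longleftrightarrow>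
         (\<forall>j::nat. nu2 (int q ^ j - s) > nu2 t)"
proof -
  define \<tau> where "\<tau> = multiplicity (2::int) t"
  have "t \<noteq> 0" using assms(6) by auto
  have "(2::int) ^ \<tau> dvd t" unfolding \<tau>_def by (rule multiplicity_dvd)
  moreover have "\<not> (2::int) ^ v dvd t" using assms(6) by (simp add: cong_0_iff)
  ultimately have "\<tau> < v" by (meson dvd_trans le_imp_power_dvd not_less)
  have coprime: "coprime (int q) (2 ^ v)" "coprime s (2 ^ v)" using assms(2,4) by simp_all
  have "typeI_duadic_exists (2 ^ v) (int q) s t \<longleftrightarrow> (\<forall>j::nat. 2 ^ Suc \<tau> dvd int q ^ j - s)"
  proof
    assume splitting: "typeI_duadic_exists (2 ^ v) (int q) s t"
    show "\<forall>j::nat. 2 ^ Suc \<tau> dvd int q ^ j - s"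
    proof (rule allI, rule ccontr)
      fix j assume "\<not> 2 ^ Suc \<tau> dvd int q ^ j - s"
      then have "gcd (int q ^ j - s) (2 ^ v) dvd t"
        using gcd_prime_power_dvd_if_not_dvd[of 2] \<open>2 ^ \<tau> dvd t\<close> by (meson dvd_trans two_is_prime)
      then show False
        using typeI_duadic_exists_imp_not_gcd_dvd[OF splitting _ coprime(2) assms(5)] by simp
    qed
  next
    assume H: "\<forall>j::nat. 2 ^ Suc \<tau> dvd int q ^ j - s"
    have s: "[s = 1] (mod 2 ^ Suc \<tau>)"
      using H[rule_format, of 0] by (simp add: cong_iff_dvd_diff dvd_diff_commute)
    have "[int q = s] (mod 2 ^ Suc \<tau>)"
      using H[rule_format, of 1] by (simp add: cong_iff_dvd_diff)
    then have q: "[int q = 1] (mod 2 ^ Suc \<tau>)" using s by (rule cong_trans)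
    have t: "[t = 2 ^ \<tau>] (mod 2 ^ Suc \<tau>)"
      unfolding \<tau>_def by (rule cong_two_power_multiplicity) fact
    have "2 ^ Suc \<tau> dvd (2::int) ^ v" using \<open>\<tau> < v\<close> by (intro le_imp_power_dvd) simp
    then show "typeI_duadic_exists (2 ^ v) (int q) s t"
      using typeI_duadic_exists_if_cong_one[of "2 ^ v" "2 ^ \<tau>"] coprime s q t by simp
  qed
  also have "\<dots> \<longleftrightarrow> (\<forall>j::nat. nu2 (int q ^ j - s) > nu2 t)"
    using nu2_gt_iff_dvd[OF \<open>t \<noteq> 0\<close>] by (simp add: \<tau>_def)
  finally show ?thesis .
qed

end
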